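(* Every bounded monomial polyhedron $\mathscr{U}\subset\mathbb{C}^n$ is contained in the unit polydisc $\mathbb{D}^n$, and its boundary contains the unit torus $\mathbb{T}^n=\{z:|z_j|=1,\ 1\le j\le n\}$.
   Context: A monomial polyhedron defined by $B\in M_n(\mathbb{Q})$ with rows $b^j$ is $\mathscr{U}=\{z\in\mathbb{C}^n: \prod_{k}|z_k|^{b^j_k}<1 \text{ for all } j\}$, where $z$ is excluded if some product is undefined due to division by zero (some $z_k=0$ with $b^j_k<0$); it is assumed to be a nonempty domain. *)

theory Defs
  imports "HOL-Analysis.Analysis"
begin

text \<open>Real power of a nonnegative real with the conventions 0^0 = 1 and 0^a = 0 for a > 0
  (the case 0^a with a < 0 is excluded separately in the definition below).\<close>
definition mpow :: "real \<Rightarrow> real \<Rightarrow> real" where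
  "mpow x a = (if x = 0 then (if a = 0 then 1 else 0) else x powr a)"

definition monomial_polyhedron :: "rat^'n^'n \<Rightarrow> (complex^'n) set" where
  "monomial_polyhedron B =
     {z. \<forall>j. (\<forall>k. z $ k = 0 \<longrightarrow> B $ j $ k \<ge> 0) \<and>
            (\<Prod>k\<in>UNIV. mpow (norm (z $ k)) (real_of_rat (B $ j $ k))) < 1}"

definition unit_polydisc :: "(complex^'n) set" where
  "unit_polydisc = {z. \<forall>j. norm (z $ j) < 1}"

definition unit_torus :: "(complex^'n) set" where
  "unit_torus = {z. \<forall>j. norm (z $ j) = 1}"

end

theory Submission
  imports Defs
begin

text \<open>At a point with no vanishing coordinate every monomial inequality reads
  \<open>\<Prod>k. |z\<^sub>k|\<^bsup>b\<^sub>j\<^sub>k\<^esup> < 1\<close>; raising it to a power \<open>t > 0\<close> keeps it, so replacing each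
  \<open>z\<^sub>k\<close> by \<open>c\<^sub>k |z\<^sub>k|\<^sup>t\<close> with \<open>|c\<^sub>k| = 1\<close> stays inside the polyhedron. Since the polyhedron
  is open, each of its points is dominated coordinatewise in modulus by a point \<open>w\<close> with
  no vanishing coordinate. If some point had a coordinate of modulus \<open>\<ge> 1\<close>, the powers
  \<open>|w|\<^sup>n\<close> would escape to infinity, contradicting boundedness. Letting \<open>t \<rightarrow> 0\<close> instead,
  the points \<open>c\<^sub>k |w\<^sub>k|\<^sup>t\<close> converge to any prescribed point \<open>c\<close> of the torus, which is not
  in the polyhedron because all its monomials equal 1.\<close>

lemma mpow_pos: "x > 0 \<Longrightarrow> mpow x a = x powr a"
  by (simp add: mpow_def)

lemma mem_monomial_polyhedron_nonzero:
  fixes B :: "rat^'n^'n"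
  assumes "\<forall>k. z $ k \<noteq> 0"
  shows "z \<in> monomial_polyhedron B \<longleftrightarrow>
    (\<forall>j. (\<Prod>k\<in>UNIV. norm (z $ k) powr real_of_rat (B $ j $ k)) < 1)"
  using assms by (simp add: monomial_polyhedron_def mpow_pos)

lemma monomial_polyhedron_powr_moduli:
  fixes B :: "rat^'n^'n"
  assumes z: "z \<in> monomial_polyhedron B" and nz: "\<forall>k. z $ k \<noteq> 0"
    and t: "t > 0" and c: "\<forall>k. norm (c k) = 1"
  shows "(\<chi> k. c k * of_real (norm (z $ k) powr t)) \<in> monomial_polyhedron B"
    (is "?w \<in> _")
proof -
  have nw: "norm (?w $ k) = norm (z $ k) powr t" for k
    using c by (simp add: norm_mult)
  have w_nz: "\<forall>k. ?w $ k \<noteq> 0"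
    using nz by (metis nw norm_eq_zero powr_eq_0_iff)
  show ?thesis
    unfolding mem_monomial_polyhedron_nonzero[OF w_nz]
  proof
    fix j
    let ?P = "\<Prod>k\<in>UNIV. norm (z $ k) powr real_of_rat (B $ j $ k)"
    have "?P < 1"
      using z by (simp add: mem_monomial_polyhedron_nonzero[OF nz])
    moreover have "?P > 0"
      using nz by (intro prod_pos) auto
    moreover have "(\<Prod>k\<in>UNIV. norm (?w $ k) powr real_of_rat (B $ j $ k)) = ?P powr t"
      unfolding nw by (simp add: powr_powr mult.commute prod_powr_distrib)
    ultimately show "(\<Prod>k\<in>UNIV. norm (?w $ k) powr real_of_rat (B $ j $ k)) < 1"
      using t by (metis powr_less_mono2 powr_one_eq_one less_eq_real_def)
  qed
qed

lemma open_contains_larger_moduli: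
  fixes S :: "(complex^'n) set"
  assumes "open S" and "z \<in> S"
  obtains w where "w \<in> S" "\<forall>k. w $ k \<noteq> 0" "\<forall>k. norm (w $ k) > norm (z $ k)"
proof -
  obtain e where e: "e > 0" "ball z e \<subseteq> S"
    using assms open_contains_ball by blast
  define u :: "complex^'n" where
    "u = (\<chi> k. if z $ k = 0 then 1 else z $ k / of_real (norm (z $ k)))"
  define d where "d = e / (2 * real CARD('n))"
  have d: "d > 0"
    using e by (simp add: d_def)
  have "norm (u $ k) = 1" for k
    by (simp add: u_def norm_divide)
  then have "norm u \<le> real CARD('n)"
    unfolding norm_vec_def using L2_set_le_sum[of UNIV "\<lambda>k. norm (u $ k)"] by simp
  then have "norm (d *\<^sub>R u) \<le> e / 2"
    using d by (simp add: d_def field_simps mult_left_mono)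
  then have "norm (d *\<^sub>R u) < e"
    using e by linarith
  then have "z + d *\<^sub>R u \<in> S"
    using e by (auto simp: dist_norm)
  moreover have moduli: "norm ((z + d *\<^sub>R u) $ k) = norm (z $ k) + d" for k
  proof (cases "z $ k = 0")
    case True
    then show ?thesis
      using d by (simp add: u_def)
  next
    case False
    then have "(z + d *\<^sub>R u) $ k = z $ k + d *\<^sub>R (z $ k / of_real (norm (z $ k)))"
      by (simp add: u_def)
    also have "\<dots> = z $ k * of_real (1 + d / norm (z $ k))"
      using False by (simp add: scaleR_conv_of_real field_simps)
    finally have "norm ((z + d *\<^sub>R u) $ k) = norm (z $ k) * (1 + d / norm (z $ k))"
      using d by (simp only: norm_mult norm_of_real) (simp add: abs_of_nonneg)
    then show ?thesis
      using False by (simp add: distrib_left)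
  qed
  moreover have "(z + d *\<^sub>R u) $ k \<noteq> 0" for k
  proof -
    have "norm ((z + d *\<^sub>R u) $ k) > 0"
      using moduli[of k] d norm_ge_zero[of "z $ k"] by linarith
    then show ?thesis
      by auto
  qed
  ultimately show ?thesis
    using d that by simp
qed

lemma unbounded_monomial_polyhedron:
  fixes B :: "rat^'n^'n"
  assumes w: "w \<in> monomial_polyhedron B" "\<forall>k. w $ k \<noteq> 0" and m: "norm (w $ m) > 1"
  shows "\<not> bounded (monomial_polyhedron B)"
proof
  assume "bounded (monomial_polyhedron B)"
  then obtain M where M: "\<forall>y\<in>monomial_polyhedron B. norm y \<le> M"
    using bounded_iff by blast
  obtain n where "M < norm (w $ m) ^ n"
    using real_arch_pow[OF m] by blast
  moreover have "norm (w $ m) ^ n \<le> norm (w $ m) ^ Suc n"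
    using m by (intro power_increasing) auto
  ultimately have n: "M < norm (w $ m) ^ Suc n"
    by linarith
  define p :: "complex^'n" where "p = (\<chi> k. 1 * of_real (norm (w $ k) powr real (Suc n)))"
  have "norm (p $ m) = norm (w $ m) powr real (Suc n)"
    by (simp add: p_def del: of_nat_Suc)
  also have "\<dots> = norm (w $ m) ^ Suc n"
    by (rule powr_realpow) (use m in linarith)
  moreover have "p \<in> monomial_polyhedron B"
    unfolding p_def by (rule monomial_polyhedron_powr_moduli[OF w]) auto
  ultimately show False
    using M n Finite_Cartesian_Product.norm_nth_le[of p m] by fastforce
qed

lemma monomial_polyhedron_subset_unit_polydisc:
  fixes B :: "rat^'n^'n"
  assumes "open (monomial_polyhedron B)" and "bounded (monomial_polyhedron B)"
  shows "monomial_polyhedron B \<subseteq> unit_polydisc"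
proof
  fix z
  assume z: "z \<in> monomial_polyhedron B"
  show "z \<in> unit_polydisc"
    unfolding unit_polydisc_def
  proof (rule CollectI, rule allI, rule ccontr)
    fix m
    assume "\<not> norm (z $ m) < 1"
    moreover obtain w where w: "w \<in> monomial_polyhedron B" "\<forall>k. w $ k \<noteq> 0"
      and "\<forall>k. norm (w $ k) > norm (z $ k)"
      using open_contains_larger_moduli[OF assms(1) z] by blast
    ultimately have "norm (w $ m) > 1"
      by (metis le_less_trans not_less)
    then show False
      using unbounded_monomial_polyhedron[OF w] assms(2) by blast
  qed
qed

lemma unit_torus_disjoint_monomial_polyhedron:
  "unit_torus \<inter> monomial_polyhedron (B :: rat^'n^'n) = {}"
proof -
  have "x \<notin> monomial_polyhedron B" if "\<forall>k. norm (x $ k) = 1" for x :: "complex^'n"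
  proof -
    have "\<forall>k. x $ k \<noteq> 0"
      using that by (metis norm_zero zero_neq_one)
    then show ?thesis
      by (simp add: mem_monomial_polyhedron_nonzero that)
  qed
  then show ?thesis
    by (auto simp: unit_torus_def)
qed

lemma unit_torus_subset_closure_monomial_polyhedron:
  fixes B :: "rat^'n^'n"
  assumes w: "w \<in> monomial_polyhedron B" "\<forall>k. w $ k \<noteq> 0"
  shows "unit_torus \<subseteq> closure (monomial_polyhedron B)"
proof
  fix x :: "complex^'n"
  assume "x \<in> unit_torus"
  then have x: "\<forall>k. norm (x $ k) = 1"
    by (simp add: unit_torus_def)
  define f :: "real \<Rightarrow> complex^'n" where
    "f t = (\<chi> k. x $ k * of_real (norm (w $ k) powr t))" for t
  have ev: "\<forall>\<^sub>F t in at_right 0. f t \<in> closure (monomial_polyhedron B)"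
    using eventually_at_right_less[of "0::real"]
    by eventually_elim
      (use monomial_polyhedron_powr_moduli[OF w _ x] closure_subset in \<open>auto simp: f_def\<close>)
  have "(f \<longlongrightarrow> (\<chi> k. x $ k * of_real (norm (w $ k) powr 0))) (at_right 0)"
    unfolding f_def by (intro tendsto_intros) (use w in auto)
  moreover have "(\<chi> k. x $ k * of_real (norm (w $ k) powr 0)) = x"
    using w by (simp add: vec_eq_iff)
  ultimately have "(f \<longlongrightarrow> x) (at_right 0)"
    by simp
  then show "x \<in> closure (monomial_polyhedron B)"
    using Lim_in_closed_set[OF closed_closure ev] by simp
qed

theorem corollary3p2:
  fixes B :: "rat^'n^'n"
  assumes "monomial_polyhedron B \<noteq> {}"
    and "open (monomial_polyhedron B)"
    and "connected (monomial_polyhedron B)"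
    and "bounded (monomial_polyhedron B)"
  shows "monomial_polyhedron B \<subseteq> unit_polydisc \<and> unit_torus \<subseteq> frontier (monomial_polyhedron B)"
proof
  show "monomial_polyhedron B \<subseteq> unit_polydisc"
    using monomial_polyhedron_subset_unit_polydisc assms(2,4) .
  obtain z where "z \<in> monomial_polyhedron B"
    using assms(1) by blast
  then obtain w where "w \<in> monomial_polyhedron B" "\<forall>k. w $ k \<noteq> 0"
    using open_contains_larger_moduli assms(2) by metis
  then have "unit_torus \<subseteq> closure (monomial_polyhedron B)"
    by (rule unit_torus_subset_closure_monomial_polyhedron)
  then show "unit_torus \<subseteq> frontier (monomial_polyhedron B)"
    using unit_torus_disjoint_monomial_polyhedron[of B] assms(2)
    by (auto simp: frontier_def interior_open)
qed

end
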